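(* Let $P$ and $Q$ be graded posets of ranks $m+1$ and $n+1$ respectively. Then $$\Theta(\Psi(P\diamond^* Q))=\begin{bmatrix} m+n\\ n\end{bmatrix}_q\cdot\Theta(\Psi(P))\cdot\Theta(\Psi(Q)).$$
   Context: All posets are graded with minimum $\hat0$, maximum $\hat1$ and rank function $\rho$. The dual diamond product is $P\diamond^*Q=\big((P-\{\hat1_P\})\times(Q-\{\hat1_Q\})\big)\cup\{\hat1\}$, where the first part carries the componentwise (Cartesian product) order and $\hat1$ is a new maximum; it has rank $m+n+1$. For such a poset $P$ of rank $r+1$, its $\mathbf{a}\mathbf{b}$-index is $\Psi(P)=\sum_{S\subseteq\{1,\dots,r\}} f_S\, v_S$, where for $S=\{s_1<\cdots<s_k\}$, $f_S$ is the number of chains $\hat0<x_1<\cdots<x_k<\hat1$ with $\rho(x_i)=s_i$, and $v_S=v_1\cdots v_r$ with $v_i=\mathbf{b}$ if $i\in S$, $v_i=\mathbf{a}-\mathbf{b}$ otherwise ($\mathbf{a},\mathbf{b}$ non-commuting variables). The Major MacMahon map $\Theta:\mathbb{Z}\langle\mathbf{a},\mathbf{b}\rangle\to\mathbb{Z}[q]$ is linear with $\Theta(u_1\cdots u_r)=\prod_{i:\,u_i=\mathbf{b}}q^i$ on monomials. $[k]=1+\cdots+q^{k-1}$, $[k]!=[k]\cdots[1]$, $[0]!=1$, $\begin{bmatrix} m+n\\ n\end{bmatrix}_q=\frac{[m+n]!}{[m]!\,[n]!}$. *)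

theory Defs
  imports Main "HOL-Computational_Algebra.Polynomial"
begin

definition is_chain :: "'a set \<Rightarrow> ('a \<Rightarrow> 'a \<Rightarrow> bool) \<Rightarrow> bool" where
  "is_chain C le \<longleftrightarrow> (\<forall>u\<in>C. \<forall>v\<in>C. le u v \<or> le v u)"

definition covers :: "'a set \<Rightarrow> ('a \<Rightarrow> 'a \<Rightarrow> bool) \<Rightarrow> 'a \<Rightarrow> 'a \<Rightarrow> bool" where
  "covers X le x y \<longleftrightarrow> x \<in> X \<and> y \<in> X \<and> le x y \<and> x \<noteq> y \<and>
     \<not> (\<exists>z\<in>X. le x z \<and> le z y \<and> z \<noteq> x \<and> z \<noteq> y)"

definition graded_poset :: "'a set \<Rightarrow> ('a \<Rightarrow> 'a \<Rightarrow> bool) \<Rightarrow> bool" where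
  "graded_poset X le \<longleftrightarrow>
     finite X \<and>
     (\<forall>x\<in>X. le x x) \<and>
     (\<forall>x\<in>X. \<forall>y\<in>X. le x y \<and> le y x \<longrightarrow> x = y) \<and>
     (\<forall>x\<in>X. \<forall>y\<in>X. \<forall>z\<in>X. le x y \<and> le y z \<longrightarrow> le x z) \<and>
     (\<exists>z\<in>X. \<forall>x\<in>X. le z x) \<and>
     (\<exists>t\<in>X. \<forall>x\<in>X. le x t) \<and>
     (\<exists>\<rho>::'a \<Rightarrow> nat. \<forall>x y. covers X le x y \<longrightarrow> \<rho> y = Suc (\<rho> x))"

definition pbot :: "'a set \<Rightarrow> ('a \<Rightarrow> 'a \<Rightarrow> bool) \<Rightarrow> 'a" where
  "pbot X le = (THE z. z \<in> X \<and> (\<forall>x\<in>X. le z x))"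

definition ptop :: "'a set \<Rightarrow> ('a \<Rightarrow> 'a \<Rightarrow> bool) \<Rightarrow> 'a" where
  "ptop X le = (THE t. t \<in> X \<and> (\<forall>x\<in>X. le x t))"

text \<open>Rank function: rho(x) = (number of elements of a longest chain in [0,x]) - 1;
  in a graded poset this is the usual rank function.\<close>
definition prank :: "'a set \<Rightarrow> ('a \<Rightarrow> 'a \<Rightarrow> bool) \<Rightarrow> 'a \<Rightarrow> nat" where
  "prank X le x = Max {card C | C. C \<subseteq> {y\<in>X. le y x} \<and> is_chain C le} - 1"

definition poset_rank :: "'a set \<Rightarrow> ('a \<Rightarrow> 'a \<Rightarrow> bool) \<Rightarrow> nat" where
  "poset_rank X le = prank X le (ptop X le)"

definition flag_f :: "'a set \<Rightarrow> ('a \<Rightarrow> 'a \<Rightarrow> bool) \<Rightarrow> nat set \<Rightarrow> nat" where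
  "flag_f X le S = card {C. C \<subseteq> X - {pbot X le, ptop X le} \<and> is_chain C le \<and>
                          inj_on (prank X le) C \<and> prank X le ` C = S}"

text \<open>An element of Z<a,b> is represented as a formal sum: a list of (coefficient, word)
  pairs; a word is a list of letters, False = a, True = b.\<close>
type_synonym abpoly = "(int \<times> bool list) list"

definition ab_mult :: "abpoly \<Rightarrow> abpoly \<Rightarrow> abpoly" where
  "ab_mult p q = [(c * d, u @ v). (c, u) \<leftarrow> p, (d, v) \<leftarrow> q]"

definition ab_scale :: "int \<Rightarrow> abpoly \<Rightarrow> abpoly" where
  "ab_scale k p = map (\<lambda>(c, u). (k * c, u)) p"

definition ab_one :: abpoly where "ab_one = [(1, [])]"
definition ab_b :: abpoly where "ab_b = [(1, [True])]"
definition ab_a_minus_b :: abpoly where "ab_a_minus_b = [(1, [False]), (-1, [True])]"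

definition vS :: "nat \<Rightarrow> nat set \<Rightarrow> abpoly" where
  "vS r S = foldr ab_mult (map (\<lambda>i. if i \<in> S then ab_b else ab_a_minus_b) [1..<r+1]) ab_one"

text \<open>ab-index of a poset of rank r+1: sum over S subset {1..r} of f_S v_S
  (subseqs [1..r] enumerates each subset of {1..r} exactly once).\<close>
definition ab_index :: "'a set \<Rightarrow> ('a \<Rightarrow> 'a \<Rightarrow> bool) \<Rightarrow> abpoly" where
  "ab_index X le = (let r = poset_rank X le - 1 in
     concat (map (\<lambda>S. ab_scale (int (flag_f X le S)) (vS r S))
                 (map set (subseqs [1..<r+1]))))"

definition theta_word :: "bool list \<Rightarrow> int poly" where
  "theta_word u = (\<Prod>i\<in>{i. 1 \<le> i \<and> i \<le> length u \<and> u ! (i - 1)}. monom 1 i)"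

definition Theta :: "abpoly \<Rightarrow> int poly" where
  "Theta p = (\<Sum>(c, u) \<leftarrow> p. of_int c * theta_word u)"

definition qint :: "nat \<Rightarrow> int poly" where
  "qint k = (\<Sum>j<k. monom 1 j)"

definition qfact :: "nat \<Rightarrow> int poly" where
  "qfact k = (\<Prod>i=1..k. qint i)"

definition qbinom :: "nat \<Rightarrow> nat \<Rightarrow> int poly" where
  "qbinom N k = qfact N div (qfact k * qfact (N - k))"

text \<open>Carrier ((P - {1}) x (Q - {1})) together with a new maximum, represented by None.\<close>
definition dd_carrier :: "'a set \<Rightarrow> ('a \<Rightarrow> 'a \<Rightarrow> bool) \<Rightarrow> 'b set \<Rightarrow> ('b \<Rightarrow> 'b \<Rightarrow> bool)
    \<Rightarrow> ('a \<times> 'b) option set" where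
  "dd_carrier X leX Y leY =
     insert None (Some ` ((X - {ptop X leX}) \<times> (Y - {ptop Y leY})))"

fun dd_le :: "('a \<Rightarrow> 'a \<Rightarrow> bool) \<Rightarrow> ('b \<Rightarrow> 'b \<Rightarrow> bool)
    \<Rightarrow> ('a \<times> 'b) option \<Rightarrow> ('a \<times> 'b) option \<Rightarrow> bool" where
  "dd_le leX leY _ None = True"
| "dd_le leX leY None (Some _) = False"
| "dd_le leX leY (Some (x, y)) (Some (x', y')) = (leX x x' \<and> leY y y')"

end

theory Submission
  imports Defs "HOL-Computational_Algebra.Polynomial_FPS"
begin

text \<open>
  Under \<open>Theta\<close> the monomial \<open>v_S\<close> of length \<open>r\<close> becomes
  \<open>(q;q)_r * prod_{i in S} q^i/(1 - q^i)\<close>, so summing over the chains of the proper part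
  gives \<open>Theta(Psi(P)) = (q;q)_m * F(P)\<close>, where \<open>F(P)\<close> is the power series
  \<open>sum_c prod_{x in c} q^rho(x)/(1 - q^rho(x))\<close>. Expanding the geometric series, the
  coefficients of \<open>F(P)\<close> up to degree \<open>L\<close> are those of the generating function
  \<open>sum q^(rho(x_1) + ... + rho(x_L))\<close> of the multichains \<open>x_1 >= ... >= x_L\<close> of
  \<open>P - {1}\<close>: a chain whose elements are repeated \<open>k_x >= 1\<close> times contributes
  \<open>prod_x q^(k_x rho(x))\<close>, the remaining entries being \<open>0\<close>, which has rank 0.
  In the dual diamond product the rank of \<open>(x, y)\<close> is \<open>rho(x) + rho(y)\<close>, and the multichains
  of length \<open>L\<close> of its proper part are exactly the zipped pairs of multichains of length
  \<open>L\<close>, so \<open>F\<close> is multiplicative. The theorem follows from \<open>(q;q)_k = (1 - q)^k [k]!\<close>.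
\<close>

unbundle fps_syntax

section \<open>\<open>q\<close>-integers, \<open>q\<close>-factorials and Gaussian polynomials\<close>

lemma qint_Suc: "qint (Suc k) = qint k + monom 1 k"
  unfolding qint_def by simp

lemma qint_add: "qint a + monom 1 a * qint b = qint (a + b)"
proof (induction b)
  case 0 thus ?case by (simp add: qint_def)
next
  case (Suc b)
  have "qint a + monom 1 a * qint (Suc b) = (qint a + monom 1 a * qint b) + monom 1 a * monom 1 b"
    by (simp add: qint_Suc algebra_simps)
  also have "\<dots> = qint (a + Suc b)" by (simp add: Suc.IH mult_monom qint_Suc)
  finally show ?case .
qed

lemma qint_nonzero: "0 < k \<Longrightarrow> qint k \<noteq> 0"
proof -
  assume "0 < k"
  hence "coeff (qint k) 0 = 1" unfolding qint_def by (simp add: coeff_sum)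
  thus "qint k \<noteq> 0" by auto
qed

lemma qfact_Suc: "qfact (Suc k) = qfact k * qint (Suc k)"
  unfolding qfact_def by (simp add: prod.nat_ivl_Suc' mult.commute)

lemma qfact_nonzero: "qfact k \<noteq> 0"
  unfolding qfact_def using qint_nonzero by (simp add: prod_zero_iff)

fun gauss_poly :: "nat \<Rightarrow> nat \<Rightarrow> int poly" where
  "gauss_poly 0 n = 1"
| "gauss_poly (Suc m) 0 = 1"
| "gauss_poly (Suc m) (Suc n) = gauss_poly (Suc m) n + monom 1 (Suc n) * gauss_poly m (Suc n)"

lemma gauss_poly_qfact: "gauss_poly m n * qfact m * qfact n = qfact (m + n)"
proof (induction m n rule: gauss_poly.induct)
  case (3 m n)
  have "gauss_poly (Suc m) (Suc n) * qfact (Suc m) * qfact (Suc n)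
     = (gauss_poly (Suc m) n * qfact (Suc m) * qfact n) * qint (Suc n)
       + monom 1 (Suc n) * (gauss_poly m (Suc n) * qfact m * qfact (Suc n)) * qint (Suc m)"
    by (simp add: qfact_Suc algebra_simps)
  also have "\<dots> = qfact (Suc (m + n)) * (qint (Suc n) + monom 1 (Suc n) * qint (Suc m))"
    using 3 by (simp add: algebra_simps)
  also have "qint (Suc n) + monom 1 (Suc n) * qint (Suc m) = qint (Suc (Suc (m + n)))"
    using qint_add[of "Suc n" "Suc m"] by (simp add: add.commute)
  finally show ?case by (simp add: qfact_Suc)
qed (simp_all add: qfact_def)

lemma qbinom_eq_gauss_poly: "qbinom (m + n) n = gauss_poly m n"
proof -
  have "qfact (m + n) = gauss_poly m n * (qfact n * qfact m)"
    using gauss_poly_qfact[of m n] by (simp add: algebra_simps)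
  thus ?thesis unfolding qbinom_def using qfact_nonzero by simp
qed

definition qpoch :: "nat \<Rightarrow> int poly" where
  "qpoch k = (\<Prod>i=1..k. 1 - monom 1 i)"

lemma one_minus_monom_eq_qint: "1 - monom (1::int) i = (1 - monom 1 1) * qint i"
proof (induction i)
  case 0 thus ?case by (simp add: qint_def)
next
  case (Suc i)
  have "(1 - monom 1 1) * qint (Suc i) = (1 - monom 1 1) * qint i + (1 - monom (1::int) 1) * monom 1 i"
    by (simp add: qint_Suc algebra_simps)
  also have "\<dots> = 1 - monom 1 (Suc i)"
    using Suc.IH[symmetric] by (simp add: algebra_simps mult_monom)
  finally show ?case by simp
qed

lemma qpoch_eq: "qpoch k = (1 - monom 1 1) ^ k * qfact k"
proof -
  have "qpoch k = (\<Prod>i=1..k. (1 - monom 1 1) * qint i)"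
    unfolding qpoch_def by (rule prod.cong[OF refl]) (rule one_minus_monom_eq_qint)
  thus ?thesis unfolding qfact_def prod.distrib by simp
qed

lemma qbinom_from_qpoch:
  fixes r p s :: "int poly"
  assumes "r * qpoch m * qpoch n = qpoch (m + n) * p * s"
  shows "r = qbinom (m + n) n * p * s"
proof -
  have "coeff (1 - monom (1::int) 1) 0 = 1" by simp
  hence "(1 - monom (1::int) 1) ^ (m + n) \<noteq> 0" by (metis coeff_0 power_not_zero zero_neq_one)
  moreover have "(1 - monom 1 1) ^ (m + n) * (r * (qfact m * qfact n))
      = (1 - monom 1 1) ^ (m + n) * (qfact (m + n) * p * s)"
    using assms unfolding qpoch_eq by (simp add: power_add algebra_simps)
  ultimately have "r * (qfact m * qfact n) = qfact (m + n) * p * s"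
    by (metis mult_left_cancel)
  also have "\<dots> = (gauss_poly m n * p * s) * (qfact m * qfact n)"
    by (simp flip: gauss_poly_qfact add: algebra_simps)
  finally show ?thesis
    using qfact_nonzero qbinom_eq_gauss_poly mult_right_cancel by (metis no_zero_divisors)
qed

section \<open>The Major MacMahon map on the \<open>ab\<close>-index\<close>

text \<open>\<open>Theta\<close> is not multiplicative, so words are evaluated with their first letter placed
  at position \<open>k + 1\<close>; this lets a product \<open>v\<^sub>1 \<cdots> v\<^sub>r\<close> be peeled off one letter at a time.\<close>

fun theta_word_from :: "nat \<Rightarrow> bool list \<Rightarrow> int poly" where
  "theta_word_from k [] = 1"
| "theta_word_from k (a # v) = (if a then monom 1 (Suc k) else 1) * theta_word_from (Suc k) v"

lemma theta_word_from_eq: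
  "(\<Prod>i\<in>{i. 1 \<le> i \<and> i \<le> length u \<and> u ! (i - 1)}. monom 1 (i + k)) = theta_word_from k u"
proof (induction u arbitrary: k)
  case Nil
  have "{i. 1 \<le> i \<and> i \<le> length ([] :: bool list) \<and> ([] :: bool list) ! (i - 1)} = {}"
    by auto
  thus ?case by (simp only: prod.empty theta_word_from.simps(1))
next
  case (Cons a v)
  let ?S = "{i. 1 \<le> i \<and> i \<le> length v \<and> v ! (i - 1)}"
  have positions: "{i. 1 \<le> i \<and> i \<le> length (a # v) \<and> (a # v) ! (i - 1)}
      = (if a then {1} else {}) \<union> Suc ` ?S"
  proof (rule set_eqI)
    fix x show "x \<in> {i. 1 \<le> i \<and> i \<le> length (a # v) \<and> (a # v) ! (i - 1)} \<longleftrightarrow>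
        x \<in> (if a then {1} else {}) \<union> Suc ` ?S"
      by (cases x) (auto simp: nth_Cons' image_iff)
  qed
  have "finite ?S" by simp
  moreover have "(\<Prod>i\<in>Suc ` ?S. monom (1::int) (i + k)) = theta_word_from (Suc k) v"
    by (subst prod.reindex) (simp_all flip: Cons.IH)
  ultimately show ?case
    unfolding positions by (cases a) (simp_all add: prod.insert image_iff)
qed

lemma theta_word_eq: "theta_word u = theta_word_from 0 u"
  unfolding theta_word_def using theta_word_from_eq[where u = u and k = 0] by simp

definition Theta_from :: "nat \<Rightarrow> abpoly \<Rightarrow> int poly" where
  "Theta_from k p = (\<Sum>(c, u) \<leftarrow> p. of_int c * theta_word_from k u)"

lemma Theta_eq_Theta_from: "Theta p = Theta_from 0 p"
  unfolding Theta_def Theta_from_def theta_word_eq ..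

lemma Theta_from_simps [simp]:
  "Theta_from k [] = 0"
  "Theta_from k ((c, u) # p) = of_int c * theta_word_from k u + Theta_from k p"
  "Theta_from k (p @ q) = Theta_from k p + Theta_from k q"
  unfolding Theta_from_def by simp_all

lemma Theta_from_concat: "Theta_from k (concat ps) = (\<Sum>p\<leftarrow>ps. Theta_from k p)"
  by (induction ps) auto

lemma Theta_from_scale: "Theta_from k (ab_scale e p) = of_int e * Theta_from k p"
  by (induction p) (auto simp: ab_scale_def algebra_simps)

lemma Theta_from_prefix:
  "Theta_from k (map (\<lambda>(d, v). (e * d, a # v)) q)
     = of_int e * (if a then monom 1 (Suc k) else 1) * Theta_from (Suc k) q"
  by (induction q) (auto simp: algebra_simps)

definition theta_v :: "nat set \<Rightarrow> nat \<Rightarrow> int poly" where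
  "theta_v S i = (if i \<in> S then monom 1 i else 1 - monom 1 i)"

lemma Theta_from_letter:
  "Theta_from k (ab_mult (if Suc k \<in> S then ab_b else ab_a_minus_b) q)
     = theta_v S (Suc k) * Theta_from (Suc k) q"
proof (cases "Suc k \<in> S")
  case True
  have "ab_mult ab_b q = map (\<lambda>(d, v). (1 * d, True # v)) q"
    unfolding ab_mult_def ab_b_def by (induction q) auto
  thus ?thesis using True Theta_from_prefix[of k 1 True q] by (simp add: theta_v_def)
next
  case False
  have "ab_mult ab_a_minus_b q
      = map (\<lambda>(d, v). (1 * d, False # v)) q @ map (\<lambda>(d, v). ((-1) * d, True # v)) q"
    unfolding ab_mult_def ab_a_minus_b_def by (induction q) auto
  thus ?thesis using False Theta_from_prefix[of k 1 False q] Theta_from_prefix[of k "-1" True q]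
    by (simp add: theta_v_def algebra_simps)
qed

lemma Theta_from_word:
  "Theta_from k (foldr ab_mult (map (\<lambda>i. if i \<in> S then ab_b else ab_a_minus_b)
       [Suc k..<Suc k + len]) ab_one)
   = (\<Prod>i\<in>{Suc k..<Suc k + len}. theta_v S i)"
proof (induction len arbitrary: k)
  case 0 thus ?case by (simp add: ab_one_def)
next
  case (Suc len)
  have "[Suc k..<Suc k + Suc len] = Suc k # [Suc (Suc k)..<Suc (Suc k) + len]"
    by (simp add: upt_rec)
  hence "Theta_from k (foldr ab_mult (map (\<lambda>i. if i \<in> S then ab_b else ab_a_minus_b)
       [Suc k..<Suc k + Suc len]) ab_one)
     = theta_v S (Suc k) * (\<Prod>i\<in>{Suc (Suc k)..<Suc (Suc k) + len}. theta_v S i)"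
    by (simp only: list.map foldr_Cons o_apply Theta_from_letter Suc.IH)
  also have "\<dots> = (\<Prod>i\<in>{Suc k..<Suc k + Suc len}. theta_v S i)"
    by (subst (2) prod.atLeast_Suc_lessThan) auto
  finally show ?case .
qed

lemma Theta_vS: "Theta (vS r S) = (\<Prod>i=1..r. theta_v S i)"
proof -
  have "{1..r} = {Suc 0..<Suc 0 + r}" by auto
  thus ?thesis unfolding Theta_eq_Theta_from vS_def using Theta_from_word[of 0 S r] by simp
qed

lemma Theta_ab_index:
  assumes "poset_rank X le = Suc r"
  shows "Theta (ab_index X le) = (\<Sum>S\<in>Pow {1..r}. of_nat (flag_f X le S) * (\<Prod>i=1..r. theta_v S i))"
proof -
  have "Theta (ab_index X le)
      = (\<Sum>S\<leftarrow>map set (subseqs [1..<r+1]). of_nat (flag_f X le S) * (\<Prod>i=1..r. theta_v S i))"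
    unfolding ab_index_def Let_def assms Theta_eq_Theta_from Theta_from_concat
    by (simp add: Theta_from_scale Theta_vS[unfolded Theta_eq_Theta_from] o_def del: upt_Suc)
  also have "\<dots> = (\<Sum>S\<in>set (map set (subseqs [1..<r+1])). of_nat (flag_f X le S) * (\<Prod>i=1..r. theta_v S i))"
    by (rule sum_list_distinct_conv_sum_set) (simp add: distinct_set_subseqs)
  also have "set (map set (subseqs [1..<r+1])) = Pow {1..r}"
    using subseqs_powset[of "[1..<r+1]"] by auto
  finally show ?thesis .
qed

definition geom_tail :: "nat \<Rightarrow> int fps" where
  "geom_tail i = Abs_fps (\<lambda>n. if 0 < n \<and> i dvd n then 1 else 0)"

lemma geom_tail_rec:
  assumes "0 < i"
  shows "geom_tail i = fps_X ^ i * (1 + geom_tail i)"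
proof (rule fps_ext)
  fix n
  consider "n < i" | "n = i" | "i < n" by linarith
  thus "geom_tail i $ n = (fps_X ^ i * (1 + geom_tail i)) $ n"
  proof cases
    case 1
    thus ?thesis using dvd_imp_le by (auto simp: fps_X_power_mult_nth geom_tail_def)
  next
    case 3
    hence "i dvd n \<longleftrightarrow> i dvd (n - i)" by (simp add: dvd_minus_self)
    thus ?thesis using 3 by (simp add: fps_X_power_mult_nth geom_tail_def)
  qed (use assms in \<open>simp add: fps_X_power_mult_nth geom_tail_def\<close>)
qed

lemma geom_tail_mult:
  assumes "0 < i"
  shows "(1 - fps_X ^ i) * geom_tail i = fps_X ^ i"
  using geom_tail_rec[OF assms] by (simp add: algebra_simps)

lemma fps_of_theta_v_prod:
  assumes "S \<subseteq> {1..r}"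
  shows "fps_of_poly (\<Prod>i=1..r. theta_v S i) = fps_of_poly (qpoch r) * (\<Prod>i\<in>S. geom_tail i)"
proof -
  have split: "(\<Prod>i=1..r. f i) = (\<Prod>i\<in>{1..r} - S. f i) * (\<Prod>i\<in>S. f i)" for f :: "nat \<Rightarrow> int fps"
    by (rule prod.subset_diff[OF assms]) simp
  have "fps_of_poly (\<Prod>i=1..r. theta_v S i)
      = (\<Prod>i\<in>{1..r} - S. 1 - fps_X ^ i) * (\<Prod>i\<in>S. (1 - fps_X ^ i) * geom_tail i)"
    unfolding fps_of_poly_prod split
    by (intro arg_cong2[where f = "(*)"] prod.cong)
       (use assms in \<open>auto simp: theta_v_def fps_of_poly_diff fps_of_poly_monom' geom_tail_mult\<close>)
  also have "\<dots> = fps_of_poly (qpoch r) * (\<Prod>i\<in>S. geom_tail i)"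
    unfolding qpoch_def fps_of_poly_prod split prod.distrib
    by (simp add: fps_of_poly_diff fps_of_poly_monom' ac_simps)
  finally show ?thesis .
qed

section \<open>Chains and multichains in finite bounded posets\<close>

lemma inj_on_chain:
  fixes f :: "'a \<Rightarrow> 'b :: order"
  assumes "is_chain C le" "\<And>x y. x \<in> C \<Longrightarrow> y \<in> C \<Longrightarrow> le x y \<Longrightarrow> x \<noteq> y \<Longrightarrow> f x < f y"
  shows "inj_on f C"
proof
  fix x y assume xy: "x \<in> C" "y \<in> C" "f x = f y"
  show "x = y"
  proof (rule ccontr)
    assume "x \<noteq> y"
    moreover have "le x y \<or> le y x" using assms(1) xy unfolding is_chain_def by auto
    ultimately show False using assms(2)[of x y] assms(2)[of y x] xy by auto
  qed
qed

lemma card_chain_le: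
  fixes f :: "'a \<Rightarrow> nat"
  assumes "is_chain C le" "\<And>x y. x \<in> C \<Longrightarrow> y \<in> C \<Longrightarrow> le x y \<Longrightarrow> x \<noteq> y \<Longrightarrow> f x < f y"
    and "\<And>x. x \<in> C \<Longrightarrow> f x \<le> k"
  shows "card C \<le> Suc k"
proof -
  have "card C \<le> card {0..k}"
    using assms by (intro card_inj_on_le[OF inj_on_chain[OF assms(1,2)]]) auto
  thus ?thesis by simp
qed

locale finite_bounded_poset =
  fixes X :: "'a set" and le :: "'a \<Rightarrow> 'a \<Rightarrow> bool"
  assumes finite: "finite X"
    and reflexive: "x \<in> X \<Longrightarrow> le x x"
    and antisymmetric: "x \<in> X \<Longrightarrow> y \<in> X \<Longrightarrow> le x y \<Longrightarrow> le y x \<Longrightarrow> x = y"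
    and transitive: "x \<in> X \<Longrightarrow> y \<in> X \<Longrightarrow> z \<in> X \<Longrightarrow> le x y \<Longrightarrow> le y z \<Longrightarrow> le x z"
    and has_bot: "\<exists>z\<in>X. \<forall>x\<in>X. le z x"
    and has_top: "\<exists>t\<in>X. \<forall>x\<in>X. le x t"
begin

abbreviation "hat0 \<equiv> pbot X le"
abbreviation "hat1 \<equiv> ptop X le"
abbreviation "rk \<equiv> prank X le"

definition down :: "'a \<Rightarrow> 'a set" where
  "down x = {y\<in>X. le y x}"

lemma pbot_eqI: "z \<in> X \<Longrightarrow> (\<And>x. x \<in> X \<Longrightarrow> le z x) \<Longrightarrow> hat0 = z"
  unfolding pbot_def using antisymmetric by (intro the_equality) auto

lemma ptop_eqI: "z \<in> X \<Longrightarrow> (\<And>x. x \<in> X \<Longrightarrow> le x z) \<Longrightarrow> hat1 = z"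
  unfolding ptop_def using antisymmetric by (intro the_equality) auto

lemma hat0: "hat0 \<in> X" "x \<in> X \<Longrightarrow> le hat0 x"
  using has_bot pbot_eqI by auto

lemma hat1: "hat1 \<in> X" "x \<in> X \<Longrightarrow> le x hat1"
  using has_top ptop_eqI by auto

lemma down_subset: "down x \<subseteq> X"
  unfolding down_def by auto

lemma finite_down: "finite (down x)"
  using finite_subset[OF down_subset finite] .

lemma rank_chain:
  assumes "x \<in> X"
  shows "\<exists>C. C \<subseteq> down x \<and> is_chain C le \<and> card C = Suc (rk x)"
    and "C \<subseteq> down x \<Longrightarrow> is_chain C le \<Longrightarrow> card C \<le> Suc (rk x)"
proof -
  define N where "N = card ` {C. C \<subseteq> down x \<and> is_chain C le}"
  have rk: "rk x = Max N - 1"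
    unfolding prank_def N_def down_def by (simp only: setcompr_eq_image)
  have "finite N" unfolding N_def using finite_down by simp
  have "{x} \<subseteq> down x" "is_chain {x} le"
    using assms reflexive unfolding down_def is_chain_def by auto
  hence "1 \<in> N" unfolding N_def by force
  hence "1 \<le> Max N" "Max N \<in> N" using \<open>finite N\<close> by (auto intro: Max_in)
  thus "\<exists>C. C \<subseteq> down x \<and> is_chain C le \<and> card C = Suc (rk x)"
    unfolding rk N_def by auto
  assume "C \<subseteq> down x" "is_chain C le"
  hence "card C \<le> Max N" unfolding N_def using \<open>finite N\<close> N_def by auto
  thus "card C \<le> Suc (rk x)" using \<open>1 \<le> Max N\<close> unfolding rk by simp
qed

lemma rank_eqI:
  assumes "x \<in> X" "C \<subseteq> down x" "is_chain C le" "card C = Suc k"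
    and "\<And>C. C \<subseteq> down x \<Longrightarrow> is_chain C le \<Longrightarrow> card C \<le> Suc k"
  shows "rk x = k"
proof -
  obtain C' where C': "C' \<subseteq> down x" "is_chain C' le" "card C' = Suc (rk x)"
    using rank_chain(1)[OF assms(1)] by blast
  have "rk x \<le> k" using assms(5)[OF C'(1,2)] C'(3) by simp
  moreover have "k \<le> rk x" using rank_chain(2)[OF assms(1-3)] assms(4) by simp
  ultimately show ?thesis by simp
qed

lemma rank_less:
  assumes "x \<in> X" "y \<in> X" "le x y" "x \<noteq> y"
  shows "rk x < rk y"
proof -
  obtain C where C: "C \<subseteq> down x" "is_chain C le" "card C = Suc (rk x)"
    using rank_chain(1)[OF assms(1)] by blast
  have "finite C" using C(1) finite_down by (rule finite_subset)
  moreover have "y \<notin> C" using C(1) antisymmetric assms unfolding down_def by auto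
  moreover have "insert y C \<subseteq> down y" "is_chain (insert y C) le"
    using C assms reflexive transitive[of _ x y] unfolding down_def is_chain_def by auto
  ultimately have "Suc (card C) \<le> Suc (rk y)"
    using rank_chain(2)[OF assms(2), of "insert y C"] by simp
  thus ?thesis using C(3) by simp
qed

lemma rank_mono: "x \<in> X \<Longrightarrow> y \<in> X \<Longrightarrow> le x y \<Longrightarrow> rk x \<le> rk y"
  using rank_less by (cases "x = y") (auto intro: less_imp_le)

lemma down_hat0: "down hat0 = {hat0}"
  using hat0 antisymmetric reflexive unfolding down_def by auto

lemma rank_hat0: "rk hat0 = 0"
proof (rule rank_eqI[of hat0 "{hat0}"])
  show "card C \<le> Suc 0" if "C \<subseteq> down hat0" for C
    using that card_mono[of "{hat0}" C] unfolding down_hat0 by simp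
qed (use hat0 reflexive in \<open>auto simp: down_hat0 is_chain_def\<close>)

lemma hat0_ne_hat1: "poset_rank X le = Suc m \<Longrightarrow> hat0 \<noteq> hat1"
  using rank_hat0 unfolding poset_rank_def by auto

lemma rank_pos: "x \<in> X \<Longrightarrow> x \<noteq> hat0 \<Longrightarrow> 0 < rk x"
  using rank_less[of hat0 x] hat0 rank_hat0 by auto

lemma rank_less_hat1: "x \<in> X \<Longrightarrow> x \<noteq> hat1 \<Longrightarrow> rk x < rk hat1"
  using rank_less[of x hat1] hat1 by auto

lemma inj_on_rank_chain: "C \<subseteq> X \<Longrightarrow> is_chain C le \<Longrightarrow> inj_on rk C"
  by (rule inj_on_chain[of C le]) (auto intro: rank_less)

lemma chain_has_max:
  assumes "C \<noteq> {}" "C \<subseteq> X" "is_chain C le"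
  shows "\<exists>x\<in>C. \<forall>y\<in>C. le y x"
proof -
  have "finite C" using assms(2) finite by (rule finite_subset)
  thus ?thesis using assms
  proof (induction C rule: finite_ne_induct)
    case (singleton a) thus ?case using reflexive by auto
  next
    case (insert a C)
    have "is_chain C le" using insert.prems unfolding is_chain_def by auto
    then obtain x where x: "x \<in> C" "\<forall>y\<in>C. le y x" using insert by auto
    have "le x a \<or> le a x" using insert.prems x(1) unfolding is_chain_def by auto
    thus ?case using x insert.prems reflexive transitive[of _ x a] by auto
  qed
qed

lemma exists_rank_below_top:
  assumes "rk hat1 = Suc m"
  shows "\<exists>a\<in>X. a \<noteq> hat1 \<and> rk a = m"
proof -
  obtain C where C: "C \<subseteq> down hat1" "is_chain C le" "card C = Suc (rk hat1)"
    using rank_chain(1)[OF hat1(1)] by auto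
  let ?C = "C - {hat1}"
  have "finite C" using C(1) finite_down finite_subset by blast
  hence card: "Suc m \<le> card ?C" using C(3) assms by (simp add: card_Diff_singleton_if)
  have CX: "?C \<subseteq> X" "is_chain ?C le" using C(1,2) down_subset[of hat1] unfolding is_chain_def by auto
  have "?C \<noteq> {}"
  proof
    assume "?C = {}"
    hence "card ?C = 0" by (simp only: card.empty)
    thus False using card by simp
  qed
  then obtain x where x: "x \<in> ?C" "\<forall>y\<in>?C. le y x"
    using chain_has_max[OF _ CX] by blast
  have "?C \<subseteq> down x" using x CX unfolding down_def by auto
  hence "card ?C \<le> Suc (rk x)" using rank_chain(2)[of x ?C] CX x by auto
  moreover have "rk x < rk hat1" using rank_less_hat1[of x] x CX by auto
  ultimately show ?thesis using card assms x CX by (intro bexI[of _ x]) auto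
qed

definition chains_in :: "'a set \<Rightarrow> 'a set set" where
  "chains_in D = {C. C \<subseteq> D - {hat0} \<and> is_chain C le}"

definition chain_weight :: "'a set \<Rightarrow> int fps" where
  "chain_weight C = (\<Prod>c\<in>C. geom_tail (rk c))"

definition chain_series :: "'a set \<Rightarrow> int fps" where
  "chain_series D = (\<Sum>C\<in>chains_in D. chain_weight C)"

lemma finite_chains_in: "D \<subseteq> X \<Longrightarrow> finite (chains_in D)"
  unfolding chains_in_def by (rule finite_subset[of _ "Pow X"]) (auto simp: finite)

lemma rank_chains_in_proper_part:
  assumes "rk hat1 = Suc m" "C \<in> chains_in (X - {hat1})"
  shows "rk ` C \<subseteq> {1..m}"
proof
  fix i assume "i \<in> rk ` C"
  then obtain c where "c \<in> X" "c \<noteq> hat0" "c \<noteq> hat1" "i = rk c"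
    using assms(2) unfolding chains_in_def by auto
  thus "i \<in> {1..m}"
    using rank_pos rank_less_hat1 assms(1) by (simp add: Suc_le_eq less_Suc_eq_le)
qed

lemma Theta_ab_index_eq_sum_chains:
  assumes "poset_rank X le = Suc m"
  shows "Theta (ab_index X le) = (\<Sum>C\<in>chains_in (X - {hat1}). \<Prod>i=1..m. theta_v (rk ` C) i)"
proof -
  let ?Ch = "chains_in (X - {hat1})"
  have rank_hat1: "rk hat1 = Suc m" using assms unfolding poset_rank_def .
  have ranks: "rk ` C \<in> Pow {1..m}" if "C \<in> ?Ch" for C
    using rank_chains_in_proper_part[OF rank_hat1 that] by simp
  have "flag_f X le S = card {C \<in> ?Ch. rk ` C = S}" for S
    unfolding flag_f_def chains_in_def using inj_on_rank_chain
    by (intro arg_cong[where f = card]) blast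
  hence "Theta (ab_index X le)
      = (\<Sum>S\<in>Pow {1..m}. \<Sum>C\<in>{C \<in> ?Ch. rk ` C = S}. \<Prod>i=1..m. theta_v S i)"
    by (simp add: Theta_ab_index[OF assms])
  also have "\<dots> = (\<Sum>S\<in>Pow {1..m}. \<Sum>C\<in>{C \<in> ?Ch. rk ` C = S}. \<Prod>i=1..m. theta_v (rk ` C) i)"
    by (intro sum.cong) auto
  also have "\<dots> = (\<Sum>C\<in>?Ch. \<Prod>i=1..m. theta_v (rk ` C) i)"
    using finite_chains_in[of "X - {hat1}"] ranks by (intro sum.group) auto
  finally show ?thesis .
qed

lemma fps_Theta_ab_index:
  assumes "poset_rank X le = Suc m"
  shows "fps_of_poly (Theta (ab_index X le)) = fps_of_poly (qpoch m) * chain_series (X - {hat1})"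
proof -
  have "fps_of_poly (\<Prod>i=1..m. theta_v (rk ` C) i) = fps_of_poly (qpoch m) * chain_weight C"
    if "C \<in> chains_in (X - {hat1})" for C
  proof -
    have C: "C \<subseteq> X" "is_chain C le"
      using that unfolding chains_in_def by auto
    have "rk ` C \<subseteq> {1..m}"
      using rank_chains_in_proper_part that assms unfolding poset_rank_def by blast
    hence "fps_of_poly (\<Prod>i=1..m. theta_v (rk ` C) i)
        = fps_of_poly (qpoch m) * (\<Prod>i\<in>rk ` C. geom_tail i)"
      by (rule fps_of_theta_v_prod)
    also have "(\<Prod>i\<in>rk ` C. geom_tail i) = chain_weight C"
      unfolding chain_weight_def using inj_on_rank_chain[OF C] by (simp add: prod.reindex)
    finally show ?thesis .
  qed
  thus ?thesis
    unfolding Theta_ab_index_eq_sum_chains[OF assms] fps_of_poly_sum chain_series_def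
    by (simp add: sum_distrib_left)
qed

definition down_closed :: "'a set \<Rightarrow> bool" where
  "down_closed D \<longleftrightarrow> D \<subseteq> X \<and> hat0 \<in> D \<and> (\<forall>x\<in>D. down x \<subseteq> D)"

definition chains_below :: "'a \<Rightarrow> 'a set set" where
  "chains_below x = {C \<in> chains_in (down x). x \<notin> C}"

lemma finite_chains_below: "finite (chains_below x)"
  unfolding chains_below_def using finite_chains_in[OF down_subset] by simp

lemma down_closed_down: "x \<in> X \<Longrightarrow> down_closed (down x)"
  unfolding down_closed_def down_def using hat0 transitive by blast

lemma down_closed_remove_top: "hat0 \<noteq> hat1 \<Longrightarrow> down_closed (X - {hat1})"
  unfolding down_closed_def down_def using hat0 hat1 antisymmetric by blast

lemma chain_weight_insert:
  assumes "C \<in> chains_below x"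
  shows "chain_weight (insert x C) = geom_tail (rk x) * chain_weight C"
proof -
  have "finite C"
    using assms finite_down finite_subset unfolding chains_below_def chains_in_def by blast
  thus ?thesis using assms unfolding chain_weight_def chains_below_def by simp
qed

lemma sum_chains_with_max:
  "(\<Sum>C\<in>insert x ` chains_below x. chain_weight C)
     = geom_tail (rk x) * (\<Sum>C\<in>chains_below x. chain_weight C)"
proof -
  have "inj_on (insert x) (chains_below x)"
    unfolding chains_below_def by (rule inj_onI) (metis Diff_insert_absorb mem_Collect_eq)
  thus ?thesis
    by (simp add: sum.reindex chain_weight_insert sum_distrib_left)
qed

lemma chains_in_down:
  assumes "x \<in> X" "x \<noteq> hat0"
  shows "chains_in (down x) = chains_below x \<union> insert x ` chains_below x"
proof (intro set_eqI iffI)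
  fix C assume C: "C \<in> chains_in (down x)"
  show "C \<in> chains_below x \<union> insert x ` chains_below x"
  proof (cases "x \<in> C")
    case True
    hence "C - {x} \<in> chains_below x" "C = insert x (C - {x})"
      using C unfolding chains_below_def chains_in_def is_chain_def by auto
    thus ?thesis by blast
  qed (use C in \<open>auto simp: chains_below_def\<close>)
next
  fix C assume "C \<in> chains_below x \<union> insert x ` chains_below x"
  moreover have "x \<in> down x" using assms reflexive unfolding down_def by auto
  ultimately show "C \<in> chains_in (down x)"
    using assms reflexive unfolding chains_below_def chains_in_def is_chain_def down_def by auto
qed

lemma chain_series_down:
  assumes "x \<in> X" "x \<noteq> hat0"
  shows "chain_series (down x) = (1 + geom_tail (rk x)) * (\<Sum>C\<in>chains_below x. chain_weight C)"
proof -
  have "chains_below x \<inter> insert x ` chains_below x = {}"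
    unfolding chains_below_def by auto
  thus ?thesis
    unfolding chain_series_def chains_in_down[OF assms]
    by (simp add: sum.union_disjoint finite_chains_below sum_chains_with_max algebra_simps)
qed

lemma chains_in_split:
  assumes "down_closed D"
  shows "chains_in D = insert {} (\<Union>x\<in>D - {hat0}. insert x ` chains_below x)"
proof (intro set_eqI iffI)
  fix C assume C: "C \<in> chains_in D"
  show "C \<in> insert {} (\<Union>x\<in>D - {hat0}. insert x ` chains_below x)"
  proof (cases "C = {}")
    case False
    have CX: "C \<subseteq> X" "is_chain C le" "C \<subseteq> D - {hat0}"
      using C assms unfolding chains_in_def down_closed_def by auto
    then obtain x where x: "x \<in> C" "\<forall>y\<in>C. le y x"
      using chain_has_max[OF False CX(1,2)] by blast
    hence "C - {x} \<in> chains_below x"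
      using CX unfolding chains_below_def chains_in_def is_chain_def down_def by auto
    moreover have "C = insert x (C - {x})" "x \<in> D - {hat0}" using x CX by auto
    ultimately show ?thesis by blast
  qed simp
next
  fix C assume "C \<in> insert {} (\<Union>x\<in>D - {hat0}. insert x ` chains_below x)"
  thus "C \<in> chains_in D"
    using assms reflexive unfolding chains_in_def chains_below_def down_closed_def is_chain_def down_def
    by (auto 0 4)
qed

lemma insert_chains_below_disjoint:
  assumes "x \<in> X" "y \<in> X" "x \<noteq> y"
  shows "insert x ` chains_below x \<inter> insert y ` chains_below y = {}"
proof (rule ccontr)
  assume "insert x ` chains_below x \<inter> insert y ` chains_below y \<noteq> {}"
  then obtain A B where AB: "A \<in> chains_below x" "B \<in> chains_below y" "insert x A = insert y B"
    by auto
  hence "y \<in> A" "x \<in> B" using assms(3) by (metis insertCI insertE)+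
  hence "le y x" "le x y" using AB unfolding chains_below_def chains_in_def down_def by auto
  thus False using antisymmetric assms by auto
qed

lemma chain_series_rec:
  assumes "down_closed D"
  shows "chain_series D = 1 + (\<Sum>x\<in>D - {hat0}. fps_X ^ rk x * chain_series (down x))"
proof -
  have D: "D \<subseteq> X" "finite D" using assms finite finite_subset unfolding down_closed_def by auto
  have "chain_series D = chain_weight {} + (\<Sum>C\<in>(\<Union>x\<in>D - {hat0}. insert x ` chains_below x). chain_weight C)"
    unfolding chain_series_def chains_in_split[OF assms]
    by (rule sum.insert) (auto simp: D finite_chains_below)
  also have "(\<Sum>C\<in>(\<Union>x\<in>D - {hat0}. insert x ` chains_below x). chain_weight C)
      = (\<Sum>x\<in>D - {hat0}. \<Sum>C\<in>insert x ` chains_below x. chain_weight C)"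
  proof (rule sum.UNION_disjoint)
    show "\<forall>x\<in>D - {hat0}. \<forall>y\<in>D - {hat0}. x \<noteq> y \<longrightarrow>
        insert x ` chains_below x \<inter> insert y ` chains_below y = {}"
      using D insert_chains_below_disjoint by blast
  qed (simp_all add: D finite_chains_below)
  also have "\<dots> = (\<Sum>x\<in>D - {hat0}. fps_X ^ rk x * chain_series (down x))"
  proof (rule sum.cong[OF refl])
    fix x assume x: "x \<in> D - {hat0}"
    hence "x \<in> X" "x \<noteq> hat0" using D by auto
    hence "geom_tail (rk x) = fps_X ^ rk x * (1 + geom_tail (rk x))"
      by (intro geom_tail_rec rank_pos)
    thus "(\<Sum>C\<in>insert x ` chains_below x. chain_weight C) = fps_X ^ rk x * chain_series (down x)"
      unfolding sum_chains_with_max chain_series_down[OF \<open>x \<in> X\<close> \<open>x \<noteq> hat0\<close>]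
      by (metis mult.assoc)
  qed
  finally show ?thesis by (simp add: chain_weight_def)
qed

definition multichains :: "'a set \<Rightarrow> nat \<Rightarrow> 'a list set" where
  "multichains D L = {xs. length xs = L \<and> set xs \<subseteq> D \<and> sorted_wrt (\<lambda>a b. le b a) xs}"

definition multichain_poly :: "'a set \<Rightarrow> nat \<Rightarrow> int poly" where
  "multichain_poly D L = (\<Sum>xs\<in>multichains D L. monom 1 (sum_list (map rk xs)))"

lemma finite_multichains: "D \<subseteq> X \<Longrightarrow> finite (multichains D L)"
  unfolding multichains_def
  by (rule finite_subset[OF _ finite_lists_length_eq[OF finite, of L]]) auto

lemma multichain_poly_0: "multichain_poly D 0 = 1"
proof -
  have "multichains D 0 = {[]}" unfolding multichains_def by auto
  thus ?thesis unfolding multichain_poly_def by simp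
qed

lemma multichains_Suc:
  assumes "down_closed D"
  shows "multichains D (Suc L) = (\<Union>x\<in>D. (#) x ` multichains (down x) L)"
proof (intro set_eqI iffI)
  fix zs assume zs: "zs \<in> multichains D (Suc L)"
  then obtain x xs where eq: "zs = x # xs" unfolding multichains_def by (cases zs) auto
  have x: "x \<in> D" "length xs = L" "set xs \<subseteq> D" "\<forall>y\<in>set xs. le y x"
      "sorted_wrt (\<lambda>a b. le b a) xs"
    using zs eq unfolding multichains_def by auto
  have "set xs \<subseteq> down x" using x(3,4) assms unfolding down_def down_closed_def by auto
  hence "x \<in> D" "xs \<in> multichains (down x) L" using x unfolding multichains_def by auto
  thus "zs \<in> (\<Union>x\<in>D. (#) x ` multichains (down x) L)" using eq by auto
next
  fix zs assume "zs \<in> (\<Union>x\<in>D. (#) x ` multichains (down x) L)"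
  then obtain x xs where x: "x \<in> D" "xs \<in> multichains (down x) L" "zs = x # xs" by auto
  have "down x \<subseteq> D" using assms x(1) unfolding down_closed_def by auto
  hence "set xs \<subseteq> D" using x(2) unfolding multichains_def by auto
  moreover have "\<forall>y\<in>set xs. le y x" using x(2) unfolding multichains_def down_def by auto
  ultimately show "zs \<in> multichains D (Suc L)" using x unfolding multichains_def by auto
qed

lemma multichain_poly_Suc:
  assumes "down_closed D"
  shows "multichain_poly D (Suc L) = (\<Sum>x\<in>D. monom 1 (rk x) * multichain_poly (down x) L)"
proof -
  have "finite D" using assms finite finite_subset unfolding down_closed_def by blast
  let ?f = "\<lambda>xs. monom (1::int) (sum_list (map rk xs))"
  have "multichain_poly D (Suc L) = (\<Sum>x\<in>D. \<Sum>zs\<in>(#) x ` multichains (down x) L. ?f zs)"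
    unfolding multichain_poly_def multichains_Suc[OF assms]
    by (rule sum.UNION_disjoint) (auto simp: \<open>finite D\<close> finite_multichains down_subset)
  also have "\<dots> = (\<Sum>x\<in>D. monom 1 (rk x) * multichain_poly (down x) L)"
    unfolding multichain_poly_def by (simp add: sum.reindex sum_distrib_left mult_monom)
  finally show ?thesis .
qed

lemma multichain_poly_down_hat0: "multichain_poly (down hat0) L = 1"
proof -
  have "multichains (down hat0) L = {replicate L hat0}"
    using hat0 reflexive unfolding multichains_def down_hat0
    by (auto simp: sorted_wrt_iff_nth_less intro: replicate_length_same[symmetric])
  thus ?thesis unfolding multichain_poly_def by (simp add: rank_hat0 sum_list_replicate)
qed

lemma chain_series_nth_0:
  assumes "down_closed D"
  shows "chain_series D $ 0 = 1"
proof -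
  have "D \<subseteq> X" using assms unfolding down_closed_def by auto
  have "(fps_X ^ rk x * chain_series (down x)) $ 0 = 0" if "x \<in> D - {hat0}" for x
  proof -
    have "0 < rk x" using that \<open>D \<subseteq> X\<close> by (intro rank_pos) auto
    thus ?thesis by (simp add: fps_X_power_mult_nth)
  qed
  hence "(\<Sum>x\<in>D - {hat0}. (fps_X ^ rk x * chain_series (down x)) $ 0) = 0"
    by (rule sum.neutral[OF ballI])
  thus ?thesis
    unfolding chain_series_rec[OF assms] fps_add_nth fps_sum_nth by simp
qed

text \<open>Both sides obey the recursion of \<open>chain_series_rec\<close> (a multichain is its top element
  followed by a multichain below it), and they differ only in degrees above \<open>L\<close>.\<close>

lemma coeff_multichain_poly:
  assumes "down_closed D" "N \<le> L"
  shows "coeff (multichain_poly D L) N = chain_series D $ N"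
  using assms
proof (induction L arbitrary: D N)
  case 0
  thus ?case by (simp add: multichain_poly_0 chain_series_nth_0)
next
  case (Suc L)
  have D: "D \<subseteq> X" "hat0 \<in> D" "finite D"
    using Suc.prems finite finite_subset unfolding down_closed_def by auto
  have step: "coeff (monom 1 (rk x) * multichain_poly (down x) L) N
      = (fps_X ^ rk x * chain_series (down x)) $ N" if "x \<in> D - {hat0}" for x
  proof (cases "N < rk x")
    case False
    moreover have "0 < rk x" using that D rank_pos by auto
    ultimately have "coeff (multichain_poly (down x) L) (N - rk x) = chain_series (down x) $ (N - rk x)"
      using Suc that D by (intro Suc.IH down_closed_down) auto
    thus ?thesis using False by (simp add: coeff_monom_mult fps_X_power_mult_nth)
  qed (simp add: coeff_monom_mult fps_X_power_mult_nth)
  have "coeff (multichain_poly D (Suc L)) N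
      = coeff (monom 1 (rk hat0) * multichain_poly (down hat0) L) N
        + (\<Sum>x\<in>D - {hat0}. coeff (monom 1 (rk x) * multichain_poly (down x) L) N)"
    unfolding multichain_poly_Suc[OF Suc.prems(1)] coeff_sum
    using D by (simp add: sum.remove)
  also have "\<dots> = chain_series D $ N"
    unfolding chain_series_rec[OF Suc.prems(1)]
    by (simp add: step rank_hat0 multichain_poly_down_hat0 fps_sum_nth)
  finally show ?case .
qed

end

section \<open>The dual diamond product\<close>

locale dual_diamond =
  P: finite_bounded_poset X leX + Q: finite_bounded_poset Y leY
  for X :: "'a set" and leX and Y :: "'b set" and leY +
  fixes m n :: nat
  assumes rank_P: "poset_rank X leX = Suc m" and rank_Q: "poset_rank Y leY = Suc n"
begin

abbreviation "R \<equiv> dd_carrier X leX Y leY"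
abbreviation "leR \<equiv> dd_le leX leY"

lemma proper_part_R: "R - {None} = Some ` ((X - {P.hat1}) \<times> (Y - {Q.hat1}))"
  unfolding dd_carrier_def by auto

lemma R_cases:
  assumes "z \<in> R"
  obtains "z = None"
  | a b where "z = Some (a, b)" "a \<in> X" "a \<noteq> P.hat1" "b \<in> Y" "b \<noteq> Q.hat1"
  using assms unfolding dd_carrier_def by auto

lemma hat0_in_R: "Some (P.hat0, Q.hat0) \<in> R"
  using P.hat0 Q.hat0 P.hat0_ne_hat1[OF rank_P] Q.hat0_ne_hat1[OF rank_Q]
  unfolding dd_carrier_def by auto

lemma finite_bounded_poset_R: "finite_bounded_poset R leR"
proof
  show "finite R" using P.finite Q.finite unfolding dd_carrier_def by simp
next
  fix x assume "x \<in> R"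
  thus "leR x x" by (cases rule: R_cases) (auto intro: P.reflexive Q.reflexive)
next
  fix x y assume "x \<in> R" "y \<in> R" "leR x y" "leR y x"
  thus "x = y"
    by (cases rule: R_cases; cases rule: R_cases[OF \<open>y \<in> R\<close>])
       (auto intro: P.antisymmetric Q.antisymmetric)
next
  fix x y z assume "x \<in> R" "y \<in> R" "z \<in> R" "leR x y" "leR y z"
  thus "leR x z"
    by (cases rule: R_cases[OF \<open>z \<in> R\<close>]; cases rule: R_cases[OF \<open>y \<in> R\<close>];
        cases rule: R_cases[OF \<open>x \<in> R\<close>])
       (auto intro: P.transitive Q.transitive)
next
  have "leR (Some (P.hat0, Q.hat0)) x" if "x \<in> R" for x
    using that by (cases rule: R_cases) (auto intro: P.hat0 Q.hat0)
  thus "\<exists>z\<in>R. \<forall>x\<in>R. leR z x" using hat0_in_R by blast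
next
  show "\<exists>t\<in>R. \<forall>x\<in>R. leR x t" unfolding dd_carrier_def by auto
qed

sublocale R: finite_bounded_poset R leR
  by (rule finite_bounded_poset_R)

lemma R_hat1: "R.hat1 = None"
  by (rule R.ptop_eqI) (auto simp: dd_carrier_def)

lemma R_down:
  assumes "a \<in> X" "a \<noteq> P.hat1" "b \<in> Y" "b \<noteq> Q.hat1"
  shows "R.down (Some (a, b)) = Some ` (P.down a \<times> Q.down b)"
proof (intro set_eqI iffI)
  fix z assume "z \<in> R.down (Some (a, b))"
  hence z: "z \<in> R" "leR z (Some (a, b))" unfolding R.down_def by auto
  thus "z \<in> Some ` (P.down a \<times> Q.down b)"
    by (cases rule: R_cases) (auto simp: P.down_def Q.down_def)
next
  fix z assume "z \<in> Some ` (P.down a \<times> Q.down b)"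
  then obtain c d where z: "z = Some (c, d)" "c \<in> X" "leX c a" "d \<in> Y" "leY d b"
    unfolding P.down_def Q.down_def by auto
  have "c \<noteq> P.hat1" using z assms P.hat1 P.antisymmetric[of a c] by auto
  moreover have "d \<noteq> Q.hat1" using z assms Q.hat1 Q.antisymmetric[of b d] by auto
  ultimately show "z \<in> R.down (Some (a, b))"
    using z unfolding R.down_def by (auto simp: dd_carrier_def)
qed

definition weight :: "('a \<times> 'b) option \<Rightarrow> nat" where
  "weight z = P.rk (fst (the z)) + Q.rk (snd (the z))"

lemma weight_less:
  assumes "z \<in> R - {None}" "w \<in> R - {None}" "leR z w" "z \<noteq> w"
  shows "weight z < weight w"
proof -
  obtain a b a' b' where eq: "z = Some (a, b)" "w = Some (a', b')"
    and mem: "a \<in> X" "b \<in> Y" "a' \<in> X" "b' \<in> Y"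
    using assms(1,2) unfolding dd_carrier_def by auto
  hence le: "leX a a'" "leY b b'" using assms(3) by auto
  hence "P.rk a \<le> P.rk a'" "Q.rk b \<le> Q.rk b'" using mem P.rank_mono Q.rank_mono by auto
  moreover have "a \<noteq> a' \<or> b \<noteq> b'" using assms(4) eq by auto
  hence "P.rk a < P.rk a' \<or> Q.rk b < Q.rk b'" using mem le P.rank_less Q.rank_less by blast
  ultimately show ?thesis unfolding weight_def eq by auto
qed

lemma card_chain_le_weight:
  assumes "C \<subseteq> R - {None}" "is_chain C leR" "\<And>z. z \<in> C \<Longrightarrow> weight z \<le> k"
  shows "card C \<le> Suc k"
proof (rule card_chain_le[OF assms(2)])
  show "weight z < weight w" if "z \<in> C" "w \<in> C" "leR z w" "z \<noteq> w" for z w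
    using that assms(1) by (intro weight_less) blast+
qed (rule assms(3))

lemma weight_le:
  assumes "a \<in> X" "a \<noteq> P.hat1" "b \<in> Y" "b \<noteq> Q.hat1" "z \<in> R.down (Some (a, b))"
  shows "weight z \<le> P.rk a + Q.rk b"
proof -
  obtain c d where "z = Some (c, d)" "c \<in> X" "leX c a" "d \<in> Y" "leY d b"
    using assms(5) unfolding R_down[OF assms(1-4)] P.down_def Q.down_def by auto
  thus ?thesis
    using assms P.rank_mono[of c a] Q.rank_mono[of d b] unfolding weight_def by simp
qed

lemma card_chain_R_down:
  assumes "a \<in> X" "a \<noteq> P.hat1" "b \<in> Y" "b \<noteq> Q.hat1"
    and "C \<subseteq> R.down (Some (a, b))" "is_chain C leR"
  shows "card C \<le> Suc (P.rk a + Q.rk b)"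
proof (rule card_chain_le_weight[OF _ assms(6)])
  have "None \<notin> R.down (Some (a, b))" unfolding R_down[OF assms(1-4)] by auto
  thus "C \<subseteq> R - {None}" using assms(5) R.down_subset[of "Some (a, b)"] by blast
  show "weight z \<le> P.rk a + Q.rk b" if "z \<in> C" for z
    using weight_le[OF assms(1-4)] that assms(5) by blast
qed

lemma long_chain_R_down:
  assumes "a \<in> X" "a \<noteq> P.hat1" "b \<in> Y" "b \<noteq> Q.hat1"
  shows "\<exists>C. C \<subseteq> R.down (Some (a, b)) \<and> is_chain C leR \<and> Suc (P.rk a + Q.rk b) \<le> card C"
proof -
  obtain Ca where Ca: "Ca \<subseteq> P.down a" "is_chain Ca leX" "card Ca = Suc (P.rk a)"
    using P.rank_chain(1)[OF assms(1)] by blast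
  obtain Cb where Cb: "Cb \<subseteq> Q.down b" "is_chain Cb leY" "card Cb = Suc (Q.rk b)"
    using Q.rank_chain(1)[OF assms(3)] by blast
  \<comment> \<open>climb in the first coordinate over \<open>Q.hat0\<close>, then in the second coordinate over \<open>a\<close>\<close>
  define A where "A = Ca \<times> {Q.hat0}"
  define B where "B = {a} \<times> Cb"
  have "finite Ca" "finite Cb"
    using Ca(1) Cb(1) P.finite_down Q.finite_down finite_subset by blast+
  hence "card A + card B = card (A \<union> B) + card (A \<inter> B)"
    unfolding A_def B_def by (intro card_Un_Int) auto
  moreover have "card (A \<inter> B) \<le> 1"
    using card_mono[of "{(a, Q.hat0)}" "A \<inter> B"] unfolding A_def B_def by auto
  ultimately have "Suc (P.rk a + Q.rk b) \<le> card (Some ` (A \<union> B))"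
    using Ca(3) Cb(3) by (simp add: A_def B_def card_cartesian_product card_image)
  moreover have "a \<in> P.down a" "Q.hat0 \<in> Q.down b"
    using assms P.reflexive Q.hat0 unfolding P.down_def Q.down_def by auto
  hence "Some ` (A \<union> B) \<subseteq> R.down (Some (a, b))"
    using Ca(1) Cb(1) unfolding R_down[OF assms] A_def B_def by auto
  moreover have "\<forall>c\<in>Ca. c \<in> X \<and> leX c a" "\<forall>d\<in>Cb. d \<in> Y \<and> leY d b"
    using Ca(1) Cb(1) unfolding P.down_def Q.down_def by auto
  hence "is_chain (Some ` (A \<union> B)) leR"
    using Ca(2) Cb(2) assms(1) P.reflexive Q.reflexive Q.hat0
    unfolding is_chain_def A_def B_def by (auto, blast+)
  ultimately show ?thesis by blast
qed

lemma rank_R: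
  assumes "a \<in> X" "a \<noteq> P.hat1" "b \<in> Y" "b \<noteq> Q.hat1"
  shows "R.rk (Some (a, b)) = P.rk a + Q.rk b"
proof -
  obtain C where C: "C \<subseteq> R.down (Some (a, b))" "is_chain C leR" "Suc (P.rk a + Q.rk b) \<le> card C"
    using long_chain_R_down[OF assms] by blast
  have "Some (a, b) \<in> R" using assms unfolding dd_carrier_def by auto
  thus ?thesis
    using C card_chain_R_down[OF assms C(1,2)]
    by (intro R.rank_eqI[OF _ C(1,2) _ card_chain_R_down[OF assms]]) auto
qed

lemma card_chain_R:
  assumes "C \<subseteq> R" "is_chain C leR"
  shows "card C \<le> Suc (Suc (m + n))"
proof -
  have weight: "weight z \<le> m + n" if "z \<in> C - {None}" for z
  proof -
    have "z \<in> R" "z \<noteq> None" using that assms(1) by auto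
    then obtain c d where cd: "z = Some (c, d)" "c \<in> X" "c \<noteq> P.hat1" "d \<in> Y" "d \<noteq> Q.hat1"
      by (cases rule: R_cases) auto
    have "P.rk c < Suc m" "Q.rk d < Suc n"
      using P.rank_less_hat1[OF cd(2,3)] Q.rank_less_hat1[OF cd(4,5)] rank_P rank_Q
      unfolding poset_rank_def by simp_all
    thus ?thesis unfolding weight_def cd(1) by simp
  qed
  have "C - {None} \<subseteq> R - {None}" "is_chain (C - {None}) leR"
    using assms unfolding is_chain_def by auto
  hence "card (C - {None}) \<le> Suc (m + n)" using weight by (rule card_chain_le_weight)
  moreover have "finite C" using assms(1) R.finite by (rule finite_subset)
  hence "card C \<le> Suc (card (C - {None}))"
    by (cases "None \<in> C") (simp_all add: card_Suc_Diff1)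
  ultimately show ?thesis by linarith
qed

lemma poset_rank_R: "poset_rank R leR = Suc (m + n)"
proof -
  obtain a where a: "a \<in> X" "a \<noteq> P.hat1" "P.rk a = m"
    using P.exists_rank_below_top rank_P unfolding poset_rank_def by blast
  obtain b where b: "b \<in> Y" "b \<noteq> Q.hat1" "Q.rk b = n"
    using Q.exists_rank_below_top rank_Q unfolding poset_rank_def by blast
  have "Some (a, b) \<in> R" using a b unfolding dd_carrier_def by auto
  then obtain C where C: "C \<subseteq> R.down (Some (a, b))" "is_chain C leR"
      "card C = Suc (R.rk (Some (a, b)))"
    using R.rank_chain(1) by blast
  hence "card C = Suc (m + n)" using rank_R[OF a(1,2) b(1,2)] a(3) b(3) by simp
  have down_None: "R.down None = R" unfolding R.down_def by auto
  have None_in_R: "None \<in> R" unfolding dd_carrier_def by simp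
  have "None \<notin> C" "finite C"
    using C(1) R.finite_down finite_subset unfolding R.down_def by auto
  hence "insert None C \<subseteq> R.down None" "is_chain (insert None C) leR"
      "card (insert None C) = Suc (Suc (m + n))"
    using C(1,2) \<open>card C = Suc (m + n)\<close> R.down_subset[of "Some (a, b)"] down_None None_in_R
    unfolding is_chain_def by auto
  hence "R.rk None = Suc (m + n)"
    using None_in_R card_chain_R down_None by (intro R.rank_eqI) auto
  thus ?thesis unfolding poset_rank_def R_hat1 .
qed

definition zip_multichains :: "'a list \<times> 'b list \<Rightarrow> ('a \<times> 'b) option list" where
  "zip_multichains = (\<lambda>(xs, ys). map Some (zip xs ys))"

lemma sum_list_rank_zip:
  assumes "length xs = length ys" "set xs \<subseteq> X - {P.hat1}" "set ys \<subseteq> Y - {Q.hat1}"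
  shows "sum_list (map (R.rk \<circ> Some) (zip xs ys)) = sum_list (map P.rk xs) + sum_list (map Q.rk ys)"
  using assms by (induction xs ys rule: list_induct2) (simp_all add: rank_R)

lemma sorted_wrt_zip:
  assumes "length xs = length ys"
  shows "sorted_wrt (\<lambda>a b. leR b a) (map Some (zip xs ys)) \<longleftrightarrow>
         sorted_wrt (\<lambda>a b. leX b a) xs \<and> sorted_wrt (\<lambda>a b. leY b a) ys"
  using assms unfolding sorted_wrt_iff_nth_less by auto

lemma multichains_R:
  "R.multichains (R - {None}) L
     = zip_multichains ` (P.multichains (X - {P.hat1}) L \<times> Q.multichains (Y - {Q.hat1}) L)"
proof (intro set_eqI iffI)
  fix zs assume zs: "zs \<in> R.multichains (R - {None}) L"
  hence set_zs: "set zs \<subseteq> Some ` ((X - {P.hat1}) \<times> (Y - {Q.hat1}))"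
    unfolding R.multichains_def proper_part_R by auto
  define xs where "xs = map (fst \<circ> the) zs"
  define ys where "ys = map (snd \<circ> the) zs"
  have eq: "zs = map Some (zip xs ys)"
    using set_zs unfolding xs_def ys_def by (induction zs) auto
  have "length xs = L" "length ys = L" using zs unfolding R.multichains_def xs_def ys_def by auto
  moreover have "set xs \<subseteq> X - {P.hat1}" "set ys \<subseteq> Y - {Q.hat1}"
    using set_zs unfolding xs_def ys_def by auto
  moreover have "sorted_wrt (\<lambda>a b. leX b a) xs" "sorted_wrt (\<lambda>a b. leY b a) ys"
    using zs sorted_wrt_zip[of xs ys] calculation(1,2) unfolding R.multichains_def eq by auto
  ultimately show "zs \<in> zip_multichains ` (P.multichains (X - {P.hat1}) L \<times> Q.multichains (Y - {Q.hat1}) L)"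
    unfolding P.multichains_def Q.multichains_def zip_multichains_def eq by auto
next
  fix zs assume "zs \<in> zip_multichains ` (P.multichains (X - {P.hat1}) L \<times> Q.multichains (Y - {Q.hat1}) L)"
  then obtain xs ys where xs: "xs \<in> P.multichains (X - {P.hat1}) L" and ys: "ys \<in> Q.multichains (Y - {Q.hat1}) L"
    and eq: "zs = map Some (zip xs ys)" unfolding zip_multichains_def by auto
  have "set (zip xs ys) \<subseteq> (X - {P.hat1}) \<times> (Y - {Q.hat1})"
    using xs ys unfolding P.multichains_def Q.multichains_def by (auto dest: set_zip_leftD set_zip_rightD)
  thus "zs \<in> R.multichains (R - {None}) L"
    using xs ys sorted_wrt_zip[of xs ys]
    unfolding R.multichains_def P.multichains_def Q.multichains_def proper_part_R eq by auto
qed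

lemma inj_on_zip_multichains:
  "inj_on zip_multichains (P.multichains (X - {P.hat1}) L \<times> Q.multichains (Y - {Q.hat1}) L)"
  unfolding zip_multichains_def P.multichains_def Q.multichains_def
  by (auto intro!: inj_onI simp: inj_map_eq_map zip_eq_conv)

lemma multichain_poly_R:
  "R.multichain_poly (R - {None}) L
     = P.multichain_poly (X - {P.hat1}) L * Q.multichain_poly (Y - {Q.hat1}) L"
proof -
  let ?A = "P.multichains (X - {P.hat1}) L" and ?B = "Q.multichains (Y - {Q.hat1}) L"
  have "R.multichain_poly (R - {None}) L
      = (\<Sum>(xs, ys)\<in>?A \<times> ?B. monom 1 (sum_list (map R.rk (map Some (zip xs ys)))))"
    unfolding R.multichain_poly_def multichains_R sum.reindex[OF inj_on_zip_multichains]
    by (simp add: zip_multichains_def case_prod_beta')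
  also have "\<dots> = (\<Sum>(xs, ys)\<in>?A \<times> ?B. monom 1 (sum_list (map P.rk xs)) * monom 1 (sum_list (map Q.rk ys)))"
    by (intro sum.cong refl)
       (auto simp: sum_list_rank_zip mult_monom P.multichains_def Q.multichains_def)
  also have "\<dots> = P.multichain_poly (X - {P.hat1}) L * Q.multichain_poly (Y - {Q.hat1}) L"
    unfolding P.multichain_poly_def Q.multichain_poly_def sum_product sum.cartesian_product ..
  finally show ?thesis .
qed

lemma chain_series_R:
  "R.chain_series (R - {R.hat1}) = P.chain_series (X - {P.hat1}) * Q.chain_series (Y - {Q.hat1})"
proof (rule fps_ext)
  fix N
  let ?F = "P.chain_series (X - {P.hat1})" and ?G = "Q.chain_series (Y - {Q.hat1})"
  have closed: "P.down_closed (X - {P.hat1})" "Q.down_closed (Y - {Q.hat1})"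
      "R.down_closed (R - {R.hat1})"
    using P.down_closed_remove_top[OF P.hat0_ne_hat1[OF rank_P]]
      Q.down_closed_remove_top[OF Q.hat0_ne_hat1[OF rank_Q]]
      R.down_closed_remove_top[OF R.hat0_ne_hat1[OF poset_rank_R]] .
  have "R.chain_series (R - {R.hat1}) $ N
      = coeff (P.multichain_poly (X - {P.hat1}) N * Q.multichain_poly (Y - {Q.hat1}) N) N"
    using R.coeff_multichain_poly[OF closed(3), of N N] by (simp add: R_hat1 multichain_poly_R)
  also have "\<dots> = (\<Sum>i\<le>N. ?F $ i * ?G $ (N - i))"
    unfolding coeff_mult
    using P.coeff_multichain_poly[OF closed(1)] Q.coeff_multichain_poly[OF closed(2)] by simp
  also have "\<dots> = (?F * ?G) $ N" by (simp add: fps_mult_nth atLeast0AtMost)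
  finally show "R.chain_series (R - {R.hat1}) $ N = (?F * ?G) $ N" .
qed

theorem Theta_dual_diamond:
  "Theta (ab_index R leR) = qbinom (m + n) n * Theta (ab_index X leX) * Theta (ab_index Y leY)"
proof (rule qbinom_from_qpoch)
  have "fps_of_poly (Theta (ab_index R leR) * qpoch m * qpoch n)
      = fps_of_poly (qpoch (m + n) * Theta (ab_index X leX) * Theta (ab_index Y leY))"
    using R.fps_Theta_ab_index[OF poset_rank_R] P.fps_Theta_ab_index[OF rank_P]
      Q.fps_Theta_ab_index[OF rank_Q] chain_series_R
    by (simp add: fps_of_poly_mult ac_simps)
  thus "Theta (ab_index R leR) * qpoch m * qpoch n
      = qpoch (m + n) * Theta (ab_index X leX) * Theta (ab_index Y leY)"
    by (simp only: fps_of_poly_eq_iff)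
qed

end

lemma graded_poset_imp_finite_bounded_poset:
  "graded_poset X le \<Longrightarrow> finite_bounded_poset X le"
  unfolding graded_poset_def by unfold_locales blast+

theorem mainTheorem8:
  fixes X :: "'a set" and leX :: "'a \<Rightarrow> 'a \<Rightarrow> bool"
    and Y :: "'b set" and leY :: "'b \<Rightarrow> 'b \<Rightarrow> bool"
    and m n :: nat
  assumes "graded_poset X leX" and "graded_poset Y leY"
    and "poset_rank X leX = m + 1" and "poset_rank Y leY = n + 1"
  shows "Theta (ab_index (dd_carrier X leX Y leY) (dd_le leX leY))
         = qbinom (m + n) n * Theta (ab_index X leX) * Theta (ab_index Y leY)"
proof -
  interpret dual_diamond X leX Y leY m n
    using assms
    by (simp add: dual_diamond_def dual_diamond_axioms_def graded_poset_imp_finite_bounded_poset)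
  show ?thesis by (rule Theta_dual_diamond)
qed

end
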